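(* Let $K\subset\mathbb R^n$ be compact and $B\subset\mathbb R^m$ a closed ball centred at the origin. Let $f,g:K\to B$ be continuous maps such that for every $x\in K$ there is $\lambda>0$ (depending on $x$) with $f(x)=\lambda\cdot g(x)$. If $g$ has convex fibres and $g(K)=B$, then $f(K)\supset\delta\cdot B$ for some $\delta>0$. *)

theory Defs
  imports "HOL-Analysis.Analysis"
begin

end

theory Submission
  imports Defs
begin

(* Let d > 0 bound |f| from below on the compact set where |g| = r. For a unit vector u, the
   preimage under g of the radius [0, r u] is connected, since g is a closed map (K is compact)
   with connected fibres. On it f points along u, vanishes where g = 0 and has length at least d
   where g = r u; by the intermediate value theorem f covers the radius [0, d u]. Hence
   f(K) contains the ball of radius d, i.e. (d / r) B. *)

lemma compact_positive_lower_bound: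
  fixes h :: "'a::topological_space \<Rightarrow> real"
  assumes "compact S" and "continuous_on S h" and "\<And>x. x \<in> S \<Longrightarrow> 0 < h x"
  shows "\<exists>d>0. \<forall>x\<in>S. d \<le> h x"
proof (cases "S = {}")
  case False
  then obtain x0 where "x0 \<in> S" "\<forall>x\<in>S. h x0 \<le> h x"
    using continuous_attains_inf[OF assms(1) _ assms(2)] by blast
  with assms(3) show ?thesis by blast
qed (use zero_less_one in blast)

lemma connected_preimage_compact_monotone:
  fixes g :: "'a::t2_space \<Rightarrow> 'b::t2_space"
  assumes "compact K" and "continuous_on K g"
    and fibres: "\<And>y. y \<in> g ` K \<Longrightarrow> connected {x \<in> K. g x = y}"
    and "connected C" and "C \<subseteq> g ` K"
  shows "connected {x \<in> K. g x \<in> C}"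
proof -
  have "connected (K \<inter> g -` C)"
  proof (rule connected_closed_monotone_preimage[OF assms(2) refl _ _ assms(4,5)])
    show "closedin (top_of_set (g ` K)) (g ` U)" if "closedin (top_of_set K) U" for U
      using Abstract_Topology_2.continuous_imp_closed_map[OF that assms(2) refl assms(1)] .
    show "connected (K \<inter> g -` {y})" if "y \<in> g ` K" for y
      using fibres[OF that] by (simp add: vimage_def Int_def)
  qed
  then show ?thesis
    by (simp add: vimage_def Int_def)
qed

lemma closed_segment_in_image_of_positive_multiple:
  fixes f g :: "'a::t2_space \<Rightarrow> 'b::real_inner"
  assumes "compact K" and contf: "continuous_on K f" and contg: "continuous_on K g"
    and fg: "\<And>x. x \<in> K \<Longrightarrow> \<exists>c>0. f x = c *\<^sub>R g x"
    and fibres: "\<And>y. y \<in> g ` K \<Longrightarrow> connected {x \<in> K. g x = y}"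
    and u: "norm u = 1" and "0 \<le> r" and radius: "closed_segment 0 (r *\<^sub>R u) \<subseteq> g ` K"
    and "0 \<le> d" and bound: "\<And>x. x \<in> K \<Longrightarrow> g x = r *\<^sub>R u \<Longrightarrow> d \<le> norm (f x)"
  shows "closed_segment 0 (d *\<^sub>R u) \<subseteq> f ` K"
proof
  fix z
  assume "z \<in> closed_segment 0 (d *\<^sub>R u)"
  then obtain t where t: "0 \<le> t" "t \<le> 1" and z: "z = (t * d) *\<^sub>R u"
    by (auto simp: in_segment)
  have u_inner: "u \<bullet> u = 1"
    using u by (simp add: dot_square_norm)
  define A where "A = {x \<in> K. g x \<in> closed_segment 0 (r *\<^sub>R u)}"
  have "connected A"
    unfolding A_def
    by (rule connected_preimage_compact_monotone[OF \<open>compact K\<close> contg fibres connected_segment radius])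
  moreover have "continuous_on A (\<lambda>x. f x \<bullet> u)"
    unfolding A_def by (intro continuous_intros continuous_on_subset[OF contf]) auto
  ultimately have conn: "connected ((\<lambda>x. f x \<bullet> u) ` A)"
    by (rule connected_continuous_image[rotated])
  have on_ray: "f x = (f x \<bullet> u) *\<^sub>R u" if "x \<in> A" for x
  proof -
    from that obtain s where "x \<in> K" "g x = (s * r) *\<^sub>R u"
      by (auto simp: A_def in_segment)
    moreover obtain c where "f x = c *\<^sub>R g x"
      using fg[OF \<open>x \<in> K\<close>] by blast
    ultimately show ?thesis
      using u_inner by simp
  qed
  obtain x0 where x0: "x0 \<in> K" "g x0 = 0"
    using radius by (metis ends_in_segment(1) imageE subsetD)
  have "f x0 = 0"
    using fg[OF x0(1)] x0(2) by auto
  obtain x1 where x1: "x1 \<in> K" "g x1 = r *\<^sub>R u"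
    using radius by (metis ends_in_segment(2) imageE subsetD)
  obtain c where c: "0 < c" "f x1 = c *\<^sub>R g x1"
    using fg[OF x1(1)] by blast
  have "d \<le> f x1 \<bullet> u"
    using bound[OF x1] c x1(2) u u_inner \<open>0 \<le> r\<close> by simp
  moreover have "x0 \<in> A" "x1 \<in> A"
    using x0 x1 by (auto simp: A_def)
  ultimately have "{f x0 \<bullet> u .. f x1 \<bullet> u} \<subseteq> (\<lambda>x. f x \<bullet> u) ` A"
    by (intro connected_contains_Icc[OF conn]) auto
  moreover have "t * d \<in> {f x0 \<bullet> u .. f x1 \<bullet> u}"
    using t \<open>0 \<le> d\<close> \<open>f x0 = 0\<close> \<open>d \<le> f x1 \<bullet> u\<close> mult_left_le_one_le[of d t] by simp
  ultimately have "t * d \<in> (\<lambda>x. f x \<bullet> u) ` A"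
    by (rule subsetD)
  then obtain x where "x \<in> A" and fx: "t * d = f x \<bullet> u"
    by (rule imageE)
  have "f x = (f x \<bullet> u) *\<^sub>R u"
    using on_ray \<open>x \<in> A\<close> .
  also have "\<dots> = z"
    using fx z by simp
  finally have "f x = z" .
  with \<open>x \<in> A\<close> show "z \<in> f ` K"
    by (auto simp: A_def)
qed

lemma scaled_cball_in_image_of_positive_multiple:
  fixes f g :: "'a::t2_space \<Rightarrow> 'b::real_inner"
  assumes K: "compact K" and contf: "continuous_on K f" and contg: "continuous_on K g"
    and fg: "\<And>x. x \<in> K \<Longrightarrow> \<exists>c>0. f x = c *\<^sub>R g x"
    and fibres: "\<And>y. y \<in> g ` K \<Longrightarrow> connected {x \<in> K. g x = y}"
    and gK: "g ` K = cball 0 r" and "0 < r"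
  shows "\<exists>\<delta>>0. (\<lambda>y. \<delta> *\<^sub>R y) ` cball 0 r \<subseteq> f ` K"
proof -
  define S where "S = {x \<in> K. norm (g x) = r}"
  have "continuous_on K (\<lambda>x. norm (g x))"
    using contg by (rule continuous_on_norm)
  then have "closedin (top_of_set K) S"
    using continuous_closedin_preimage[OF _ closed_singleton, of K "\<lambda>x. norm (g x)" r]
    by (simp add: S_def vimage_def Int_def)
  then have "compact S"
    using K closedin_compact by blast
  moreover have "continuous_on S (\<lambda>x. norm (f x))"
    unfolding S_def by (intro continuous_intros continuous_on_subset[OF contf]) auto
  moreover have "0 < norm (f x)" if "x \<in> S" for x
  proof -
    from that have "x \<in> K" "norm (g x) = r"
      by (simp_all add: S_def)
    moreover obtain c where "0 < c" "f x = c *\<^sub>R g x"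
      using fg[OF \<open>x \<in> K\<close>] by blast
    ultimately show ?thesis
      using \<open>0 < r\<close> by simp
  qed
  ultimately have "\<exists>d>0. \<forall>x\<in>S. d \<le> norm (f x)"
    by (rule compact_positive_lower_bound)
  then obtain d where "0 < d" and d: "\<forall>x\<in>S. d \<le> norm (f x)"
    by blast
  have "(d / r) *\<^sub>R y \<in> f ` K" if y: "y \<in> cball 0 r" for y
  proof (cases "y = 0")
    case True
    have "0 \<in> g ` K"
      using gK \<open>0 < r\<close> by simp
    then obtain x where "x \<in> K" "g x = 0"
      by (metis imageE)
    moreover obtain c where "f x = c *\<^sub>R g x"
      using fg[OF \<open>x \<in> K\<close>] by blast
    ultimately show ?thesis
      using True by (metis image_eqI scaleR_zero_right)
  next
    case False
    define u where "u = y /\<^sub>R norm y"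
    have u: "norm u = 1"
      using False by (simp add: u_def)
    have radius: "closed_segment 0 (r *\<^sub>R u) \<subseteq> g ` K"
      unfolding gK using \<open>0 < r\<close> u by (intro closed_segment_subset) auto
    have bound: "d \<le> norm (f x)" if "x \<in> K" "g x = r *\<^sub>R u" for x
      using d that u \<open>0 < r\<close> by (simp add: S_def)
    have "closed_segment 0 (d *\<^sub>R u) \<subseteq> f ` K"
      using \<open>0 < r\<close> \<open>0 < d\<close>
      by (intro closed_segment_in_image_of_positive_multiple[OF K contf contg fg fibres u _ radius _ bound])
        simp_all
    moreover have "(d / r) *\<^sub>R y \<in> closed_segment 0 (d *\<^sub>R u)"
    proof -
      have "norm y \<le> r"
        using y by simp
      then have "(d / r) *\<^sub>R y = (norm y / r) *\<^sub>R (d *\<^sub>R u)" "norm y / r \<le> 1"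
        using False \<open>0 < r\<close> by (simp_all add: u_def)
      with \<open>0 < r\<close> show ?thesis
        unfolding in_segment by (intro exI[of _ "norm y / r"]) simp
    qed
    ultimately show ?thesis
      by (rule subsetD)
  qed
  then show ?thesis
    using \<open>0 < d\<close> \<open>0 < r\<close> by (intro exI[of _ "d / r"]) auto
qed

theorem mainTheorem15:
  fixes K :: "(real ^ 'n) set" and r :: real
    and f g :: "real ^ 'n \<Rightarrow> real ^ 'm"
  assumes "compact K"
    and "continuous_on K f" and "f ` K \<subseteq> cball 0 r"
    and "continuous_on K g" and "g ` K \<subseteq> cball 0 r"
    and "\<forall>x\<in>K. \<exists>c>0. f x = c *\<^sub>R g x"
    and "\<forall>y. convex {x \<in> K. g x = y}"
    and "g ` K = cball 0 r"
  shows "\<exists>\<delta>>0. (\<lambda>y. \<delta> *\<^sub>R y) ` cball 0 r \<subseteq> f ` K"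
proof (cases "0 < r")
  case True
  show ?thesis
    using assms(7) True
    by (intro scaled_cball_in_image_of_positive_multiple[OF assms(1,2,4) _ _ assms(8)])
      (auto simp: assms(6) convex_connected)
next
  case False
  have "y \<in> f ` K" if "y \<in> cball 0 r" for y
  proof -
    have "norm y \<le> r"
      using that by simp
    with False have "y = 0"
      by (metis norm_le_zero_iff not_less order.trans)
    with that obtain x where "x \<in> K" "g x = 0"
      using assms(8) by (metis imageE)
    with \<open>y = 0\<close> show ?thesis
      using assms(6) by force
  qed
  then show ?thesis
    by (intro exI[of _ 1]) auto
qed

end
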